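(* In the line model below, for all positive integers $k,N$ there is a deterministic protocol after which player $P_{k+1}$ knows $\mathbf{A}_k\mathbf{A}_{k-1}\cdots\mathbf{A}_1\mathbf{x}$ (over $\mathbb{F}_2$), using $O(N^2\log_2(2k)+k)$ rounds.
   Context: Line model: players $P_0,\dots,P_{k+1}$ with links $\{P_{i-1},P_i\}$ for $i\in[k+1]$; $P_0$ holds $\mathbf{x}\in\mathbb{F}_2^N$, $P_i$ holds $\mathbf{A}_i\in\mathbb{F}_2^{N\times N}$ for $i\in[k]$, $P_{k+1}$ has no input. Communication is synchronous in rounds, one bit per link per round; local computation is free. *)

theory Defs
  imports Complex_Main "HOL-Library.Z2"
begin

text \<open>Elements of F_2 are of type bit (a field). Vectors in F_2^N are functions
  nat => bit (only indices < N are relevant), N x N matrices are nat => nat => bit.\<close>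

definition matvec :: "nat \<Rightarrow> (nat \<Rightarrow> nat \<Rightarrow> bit) \<Rightarrow> (nat \<Rightarrow> bit) \<Rightarrow> (nat \<Rightarrow> bit)" where
  "matvec N M v = (\<lambda>i. \<Sum>j<N. M i j * v j)"

primrec iterprod :: "nat \<Rightarrow> (nat \<Rightarrow> nat \<Rightarrow> nat \<Rightarrow> bit) \<Rightarrow> nat \<Rightarrow> (nat \<Rightarrow> bit) \<Rightarrow> (nat \<Rightarrow> bit)" where
  "iterprod N A 0 x = x"
| "iterprod N A (Suc i) x = matvec N (A (Suc i)) (iterprod N A i x)"

datatype input = Vec "nat \<Rightarrow> bit" | Mat "nat \<Rightarrow> nat \<Rightarrow> bit" | NoInput

definition line_inputs :: "nat \<Rightarrow> (nat \<Rightarrow> bit) \<Rightarrow> (nat \<Rightarrow> nat \<Rightarrow> nat \<Rightarrow> bit) \<Rightarrow> nat \<Rightarrow> input" where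
  "line_inputs k x A i = (if i = 0 then Vec x else if i \<le> k then Mat (A i) else NoInput)"

text \<open>A deterministic synchronous protocol: in each round, player i, given its identity,
  its private input and the history of bits received so far (one pair per past round:
  bit received from the left neighbour, bit received from the right neighbour),
  chooses a pair (bit sent to left neighbour, bit sent to right neighbour).
  Each link carries one bit in each direction per round.\<close>
type_synonym protocol = "nat \<Rightarrow> input \<Rightarrow> (bool \<times> bool) list \<Rightarrow> bool \<times> bool"

primrec hist :: "protocol \<Rightarrow> (nat \<Rightarrow> input) \<Rightarrow> nat \<Rightarrow> nat \<Rightarrow> nat \<Rightarrow> (bool \<times> bool) list" where
  "hist P inp k 0 i = []"
| "hist P inp k (Suc r) i =
     hist P inp k r i @
     [( if i = 0 then False else snd (P (i - 1) (inp (i - 1)) (hist P inp k r (i - 1))),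
        if i \<ge> k + 1 then False else fst (P (i + 1) (inp (i + 1)) (hist P inp k r (i + 1))) )]"

end

theory Submission
  imports Defs "HOL-Library.Discrete_Functions"
begin

text \<open>Recursive doubling. View every input as an N \<times> N matrix (the vector x as the matrix
  with x in column 0, the missing input of P_(k+1) as the identity). After phase t, every
  player i with 2^t dividing k+1-i holds the product of the (at most) 2^t matrices of the
  players i+1-2^t, ..., i. In phase t each such player streams its N^2 bits to the right;
  the players in between forward every bit with one round of delay, so after N^2 + 2^t
  rounds the player 2^t further right has received the whole matrix and, if 2^(t+1) divides
  its distance to P_(k+1), multiplies. After L phases with k+1 < 2^L, player P_(k+1) holds
  the product of all inputs, whose column 0 is A_k \<cdots> A_1 x. The phases take
  L N^2 + 2^L - 1 rounds, and L = O(log(2k)) suffices.\<close>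

lemma hist_length [simp]: "length (hist P inp k r i) = r"
  by (induction r) auto

lemma hist_nth_stable: "e < r \<Longrightarrow> hist P inp k r i ! e = hist P inp k (Suc e) i ! e"
proof (induction r)
  case (Suc r)
  show ?case
  proof (cases "e < r")
    case False
    with Suc.prems have "e = r" by simp
    then show ?thesis by simp
  qed (use Suc in \<open>simp add: nth_append\<close>)
qed simp

lemma not_dvd_between:
  assumes "(2::nat)^t dvd (n - h)" "0 < d" "d < 2^t" "h + d \<le> n"
  shows "\<not> 2^t dvd (n - (h + d))"
proof
  assume "2^t dvd (n - (h + d))"
  with assms(1) have "2^t dvd ((n - h) - (n - (h + d)))" by (rule dvd_diff_nat)
  moreover have "(n - h) - (n - (h + d)) = d" using assms(4) by simp
  ultimately have "2^t \<le> d" using assms(2) by (simp add: dvd_imp_le)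
  with assms(3) show False by simp
qed

lemma floor_log_le_log:
  assumes "0 < n"
  shows "real (floor_log n) \<le> log 2 (real n)"
proof -
  have "real (2 ^ floor_log n) \<le> real n" using floor_log_exp2_le[OF assms] by (simp only: of_nat_le_iff)
  then have "log 2 (2 ^ floor_log n) \<le> log 2 (real n)" using assms by (subst log_le_cancel_iff) auto
  then show ?thesis by simp
qed

context fixes N :: nat begin

definition mat_trunc :: "(nat \<Rightarrow> nat \<Rightarrow> 'a::zero) \<Rightarrow> nat \<Rightarrow> nat \<Rightarrow> 'a" where
  "mat_trunc M = (\<lambda>a b. if a < N \<and> b < N then M a b else 0)"

definition mat_mult :: "(nat \<Rightarrow> nat \<Rightarrow> 'a::semiring_0) \<Rightarrow> (nat \<Rightarrow> nat \<Rightarrow> 'a) \<Rightarrow> nat \<Rightarrow> nat \<Rightarrow> 'a" where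
  "mat_mult A B = (\<lambda>a b. if a < N \<and> b < N then (\<Sum>c<N. A a c * B c b) else 0)"

definition mat_bits :: "(nat \<Rightarrow> nat \<Rightarrow> bit) \<Rightarrow> nat \<Rightarrow> bool" where
  "mat_bits M m = (M (m div N) (m mod N) = 1)"

definition mat_of_bits :: "(nat \<Rightarrow> bool) \<Rightarrow> nat \<Rightarrow> nat \<Rightarrow> bit" where
  "mat_of_bits f = (\<lambda>a b. if a < N \<and> b < N then (if f (a * N + b) then 1 else 0) else 0)"

definition input_mat :: "input \<Rightarrow> nat \<Rightarrow> nat \<Rightarrow> bit" where
  "input_mat inp = (case inp of Vec v \<Rightarrow> mat_trunc (\<lambda>a b. v a) | Mat M \<Rightarrow> mat_trunc M
     | NoInput \<Rightarrow> mat_trunc (\<lambda>a b. if a = b then 1 else 0))"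

definition phase_start :: "nat \<Rightarrow> nat" where
  "phase_start t = t * N^2 + (2^t - 1)"

definition phase :: "nat \<Rightarrow> nat" where
  "phase r = (LEAST t. r < phase_start (Suc t))"

lemma mat_mult_assoc: "mat_mult (mat_mult A B) C = mat_mult A (mat_mult B C)"
proof (intro ext)
  fix a b
  show "mat_mult (mat_mult A B) C a b = mat_mult A (mat_mult B C) a b"
  proof (cases "a < N \<and> b < N")
    case True
    have "mat_mult (mat_mult A B) C a b = (\<Sum>d<N. \<Sum>c<N. A a c * B c d * C d b)"
      using True by (simp add: mat_mult_def sum_distrib_right)
    also have "\<dots> = (\<Sum>c<N. \<Sum>d<N. A a c * B c d * C d b)"
      by (rule sum.swap)
    also have "\<dots> = mat_mult A (mat_mult B C) a b"
      using True by (simp add: mat_mult_def sum_distrib_left mult.assoc)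
    finally show ?thesis .
  qed (auto simp: mat_mult_def)
qed

lemma mat_trunc_mat_mult [simp]: "mat_trunc (mat_mult A B) = mat_mult A B"
  by (intro ext) (simp add: mat_trunc_def mat_mult_def)

lemma mat_trunc_idem [simp]: "mat_trunc (mat_trunc M) = mat_trunc M"
  by (intro ext) (simp add: mat_trunc_def)

lemma mat_trunc_input_mat [simp]: "mat_trunc (input_mat inp) = input_mat inp"
  by (cases inp) (simp_all add: input_mat_def)

lemma mat_mult_identity_left:
  assumes "a < N"
  shows "mat_mult (input_mat NoInput) B a b = (if b < N then B a b else 0)"
proof (cases "b < N")
  case True
  have "(\<Sum>c<N. input_mat NoInput a c * B c b) = (\<Sum>c<N. if c = a then B c b else 0)"
    using assms by (intro sum.cong) (auto simp: input_mat_def mat_trunc_def)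
  then show ?thesis using True assms by (simp add: mat_mult_def)
qed (simp add: mat_mult_def)

lemma index_less_square: "a < N \<Longrightarrow> b < N \<Longrightarrow> a * N + b < N^2"
proof -
  assume "a < N" "b < N"
  then have "a * N + b < (a + 1) * N" by simp
  also have "\<dots> \<le> N * N" using \<open>a < N\<close> by (intro mult_right_mono) auto
  finally show ?thesis by (simp add: power2_eq_square)
qed

lemma mat_of_bits_mat_bits: "mat_of_bits (mat_bits M) = mat_trunc M"
  by (intro ext) (auto simp: mat_of_bits_def mat_bits_def mat_trunc_def)

lemma mat_of_bits_cong: "(\<And>m. m < N^2 \<Longrightarrow> f m = g m) \<Longrightarrow> mat_of_bits f = mat_of_bits g"
  unfolding mat_of_bits_def using index_less_square by (intro ext) auto

lemma phase_start_Suc: "phase_start (Suc t) = phase_start t + N^2 + 2^t"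
proof -
  have "(1::nat) \<le> 2^t" by simp
  then show ?thesis unfolding phase_start_def by (simp add: algebra_simps)
qed

lemma phase_start_mono: "t \<le> t' \<Longrightarrow> phase_start t \<le> phase_start t'"
  by (induction t') (auto simp: phase_start_Suc le_Suc_eq)

lemma phase_eqI:
  assumes "phase_start t \<le> r" "r < phase_start (Suc t)"
  shows "phase r = t"
  unfolding phase_def
proof (rule Least_equality)
  fix t' assume "r < phase_start (Suc t')"
  with assms(1) have "\<not> phase_start (Suc t') \<le> phase_start t" by simp
  then show "t \<le> t'" using phase_start_mono[of "Suc t'" t] by linarith
qed fact

lemma phase_start_le_bound: "phase_start L \<le> L * N^2 + 2^L"
  unfolding phase_start_def by simp

context fixes k :: nat begin

text \<open>The matrix held by player i with input inp after t phases, computed from the stream g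
  of bits received from the left: in phase t the matrix of the player 2^t to the left
  arrives in rounds phase_start t + 2^t - 1, ..., phase_start t + 2^t - 2 + N^2.\<close>

primrec known_prod :: "nat \<Rightarrow> input \<Rightarrow> (nat \<Rightarrow> bool) \<Rightarrow> nat \<Rightarrow> nat \<Rightarrow> nat \<Rightarrow> bit" where
  "known_prod i inp g 0 = input_mat inp"
| "known_prod i inp g (Suc t) = (if 2^(Suc t) dvd (k+1-i) \<and> 2^t \<le> i
      then mat_mult (known_prod i inp g t) (mat_of_bits (\<lambda>m. g (phase_start t + m + 2^t - 1)))
      else known_prod i inp g t)"

definition doubling_protocol :: protocol where
  "doubling_protocol i inp h = (False, (let r = length h; t = phase r; m = r - phase_start t in
     if 2^t dvd (k+1-i) then m < N^2 \<and> mat_bits (known_prod i inp (\<lambda>e. fst (h!e)) t) m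
     else fst (h ! (r-1))))"

lemma known_prod_cong:
  "(\<And>e. e < phase_start t \<Longrightarrow> g e = g' e) \<Longrightarrow> known_prod i inp g t = known_prod i inp g' t"
proof (induction t)
  case (Suc t)
  have "\<And>e. e < phase_start t \<Longrightarrow> g e = g' e"
    using Suc.prems phase_start_mono[of t "Suc t"] by force
  moreover have "mat_of_bits (\<lambda>m. g (phase_start t + m + 2^t - 1))
      = mat_of_bits (\<lambda>m. g' (phase_start t + m + 2^t - 1))"
    using Suc.prems by (intro mat_of_bits_cong) (simp add: phase_start_Suc)
  ultimately show ?case using Suc.IH by simp
qed simp

context fixes inp :: "nat \<Rightarrow> input" begin

abbreviation view :: "nat \<Rightarrow> nat \<Rightarrow> (bool \<times> bool) list" where
  "view r i \<equiv> hist doubling_protocol inp k r i"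

definition recv :: "nat \<Rightarrow> nat \<Rightarrow> bool" where
  "recv i e = fst (view (Suc e) i ! e)"

lemma hist_fst_eq_recv: "e < r \<Longrightarrow> fst (view r i ! e) = recv i e"
  unfolding recv_def using hist_nth_stable by metis

lemma recv_from_left:
  "1 \<le> i \<Longrightarrow> recv i e = snd (doubling_protocol (i-1) (inp (i-1)) (view e (i-1)))"
  unfolding recv_def by (simp add: nth_append)

lemma known_prod_hist:
  "phase_start t \<le> r \<Longrightarrow> known_prod i inp' (\<lambda>e. fst (view r i ! e)) t = known_prod i inp' (recv i) t"
  by (rule known_prod_cong) (simp add: hist_fst_eq_recv)

lemma holder_sends:
  assumes "2^t dvd (k+1-i)" "m < N^2"
  shows "snd (doubling_protocol i (inp i) (view (phase_start t + m) i))
       = mat_bits (known_prod i (inp i) (recv i) t) m"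
proof -
  have "phase (phase_start t + m) = t"
    by (rule phase_eqI) (use assms in \<open>auto simp: phase_start_Suc\<close>)
  then show ?thesis
    using assms known_prod_hist[of t "phase_start t + m" i "inp i"]
    by (simp add: doubling_protocol_def Let_def)
qed

lemma relay_forwards:
  assumes "\<not> 2^t dvd (k+1-i)" "phase_start t \<le> r" "r < phase_start (Suc t)" "1 \<le> r"
  shows "snd (doubling_protocol i (inp i) (view r i)) = recv i (r-1)"
proof -
  have "phase r = t" by (rule phase_eqI) (use assms in auto)
  then show ?thesis using assms hist_fst_eq_recv[of "r-1" r i]
    by (simp add: doubling_protocol_def Let_def)
qed

lemma stream_arrives:
  assumes "2^t dvd (k+1-h)" "m < N^2" "1 \<le> d" "d \<le> 2^t" "h + d \<le> k+1"
  shows "recv (h+d) (phase_start t + m + d - 1) = mat_bits (known_prod h (inp h) (recv h) t) m"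
  using assms(3-5)
proof (induction d)
  case (Suc d)
  show ?case
  proof (cases "d = 0")
    case True
    then show ?thesis
      using recv_from_left[of "h+1" "phase_start t + m"] holder_sends[OF assms(1,2)] by simp
  next
    case False
    have "\<not> 2^t dvd (k+1-(h+d))"
      by (rule not_dvd_between[OF assms(1)]) (use False Suc.prems in auto)
    then have "snd (doubling_protocol (h+d) (inp (h+d)) (view (phase_start t + m + d) (h+d)))
        = recv (h+d) (phase_start t + m + d - 1)"
      by (rule relay_forwards) (use Suc.prems False assms(2) in \<open>auto simp: phase_start_Suc\<close>)
    then show ?thesis
      using Suc False recv_from_left[of "h + Suc d" "phase_start t + m + d"] by simp
  qed
qed simp

primrec window_prod :: "nat \<Rightarrow> nat \<Rightarrow> nat \<Rightarrow> nat \<Rightarrow> bit" where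
  "window_prod j 0 = input_mat (inp j)"
| "window_prod j (Suc n) = mat_mult (input_mat (inp (j + Suc n))) (window_prod j n)"

lemma window_prod_split:
  "window_prod j (a + b + 1) = mat_mult (window_prod (j+b+1) a) (window_prod j b)"
proof (induction a)
  case (Suc a)
  have "window_prod j (Suc a + b + 1)
      = mat_mult (input_mat (inp (j + Suc a + b + 1))) (window_prod j (a + b + 1))"
    by (simp add: algebra_simps)
  also have "\<dots> = mat_mult (window_prod (j+b+1) (Suc a)) (window_prod j b)"
    using Suc by (simp add: mat_mult_assoc algebra_simps)
  finally show ?case .
qed simp

text \<open>The product of the 2^t matrices ending at player i, clipped at player 0.\<close>

definition block_prod :: "nat \<Rightarrow> nat \<Rightarrow> nat \<Rightarrow> nat \<Rightarrow> bit" where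
  "block_prod t i = window_prod (i + 1 - 2^t) (i - (i + 1 - 2^t))"

lemma block_prod_Suc:
  assumes "2^t \<le> i"
  shows "block_prod (Suc t) i = mat_mult (block_prod t i) (block_prod t (i - 2^t))"
proof -
  define p :: nat where "p = 2^t"
  have p: "1 \<le> p" "p \<le> i" using assms by (simp_all add: p_def)
  define lo where "lo = i + 1 - 2*p"
  have "i - lo = (p-1) + (i - p - lo) + 1" using p by (simp add: lo_def)
  then have "block_prod (Suc t) i = window_prod lo ((p-1) + (i - p - lo) + 1)"
    unfolding block_prod_def by (simp add: lo_def p_def)
  also have "\<dots> = mat_mult (window_prod (lo + (i - p - lo) + 1) (p-1)) (window_prod lo (i - p - lo))"
    by (rule window_prod_split)
  also have "lo + (i - p - lo) + 1 = i + 1 - p" using p by (simp add: lo_def)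
  also have "window_prod (i + 1 - p) (p-1) = block_prod t i"
    unfolding block_prod_def using p by (simp add: p_def)
  also have "window_prod lo (i - p - lo) = block_prod t (i - p)"
    unfolding block_prod_def using p by (simp add: lo_def p_def mult_2)
  finally show ?thesis by (simp add: p_def)
qed

lemma mat_trunc_window_prod [simp]: "mat_trunc (window_prod j n) = window_prod j n"
  by (cases n) simp_all

lemma block_prod_Suc_small: "i < 2^t \<Longrightarrow> block_prod (Suc t) i = block_prod t i"
  unfolding block_prod_def by simp

lemma known_prod_eq_block_prod:
  "i \<le> k+1 \<Longrightarrow> 2^t dvd (k+1-i) \<Longrightarrow> known_prod i (inp i) (recv i) t = block_prod t i"
proof (induction t arbitrary: i)
  case 0 then show ?case by (simp add: block_prod_def)
next
  case (Suc t)
  have dvd_t: "2^t dvd (k+1-i)" using Suc.prems(2) by (rule dvd_trans[rotated]) simp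
  have IH_i: "known_prod i (inp i) (recv i) t = block_prod t i" using Suc dvd_t by blast
  show ?case
  proof (cases "2^t \<le> i")
    case True
    define h where "h = i - 2^t"
    have hi: "h + 2^t = i" using True by (simp add: h_def)
    have "k+1-h = (k+1-i) + 2^t" using hi Suc.prems(1) by simp
    then have dvd_h: "2^t dvd (k+1-h)" using dvd_t by simp
    have IH_h: "known_prod h (inp h) (recv h) t = block_prod t h" using Suc.IH dvd_h Suc.prems(1) hi by simp
    have "mat_of_bits (\<lambda>m. recv i (phase_start t + m + 2^t - 1)) = mat_of_bits (mat_bits (block_prod t h))"
      using stream_arrives[OF dvd_h, of _ "2^t"] IH_h hi Suc.prems(1) by (intro mat_of_bits_cong) simp
    also have "\<dots> = block_prod t h"
      by (simp add: mat_of_bits_mat_bits block_prod_def)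
    finally show ?thesis
      using Suc.prems(2) True IH_i block_prod_Suc[OF True] by (simp add: h_def)
  qed (use IH_i block_prod_Suc_small in simp)
qed

end
end
end

lemma window_prod_column:
  assumes "1 \<le> N" "n \<le> k"
  shows "window_prod N (line_inputs k x A) 0 n a 0 = (if a < N then iterprod N A n x a else 0)"
  using assms(2)
proof (induction n arbitrary: a)
  case 0 then show ?case using assms(1) by (simp add: input_mat_def line_inputs_def mat_trunc_def)
next
  case (Suc n)
  have A: "input_mat N (line_inputs k x A (Suc n)) = mat_trunc N (A (Suc n))"
    using Suc.prems by (simp add: input_mat_def line_inputs_def)
  show ?case
  proof (cases "a < N")
    case True
    have "window_prod N (line_inputs k x A) 0 (Suc n) a 0
        = (\<Sum>c<N. mat_trunc N (A (Suc n)) a c * window_prod N (line_inputs k x A) 0 n c 0)"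
      using True assms(1) A by (simp add: mat_mult_def)
    also have "\<dots> = (\<Sum>c<N. A (Suc n) a c * iterprod N A n x c)"
      using True Suc by (intro sum.cong) (auto simp: mat_trunc_def)
    finally show ?thesis using True by (simp add: matvec_def)
  qed (simp add: mat_mult_def A)
qed

lemma doubling_protocol_correct:
  fixes x :: "nat \<Rightarrow> bit" and A :: "nat \<Rightarrow> nat \<Rightarrow> nat \<Rightarrow> bit"
  assumes "1 \<le> N" "k + 1 < 2^L" "j < N"
  defines "inp \<equiv> line_inputs k x A"
  shows "known_prod N k (k+1) NoInput
           (\<lambda>e. fst (hist (doubling_protocol N k) inp k (phase_start N L) (k+1) ! e)) L j 0
         = iterprod N A k x j"
proof -
  have NoInput: "inp (k+1) = NoInput" by (simp add: inp_def line_inputs_def)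
  have "known_prod N k (k+1) NoInput
           (\<lambda>e. fst (hist (doubling_protocol N k) inp k (phase_start N L) (k+1) ! e)) L
      = known_prod N k (k+1) (inp (k+1)) (recv N k inp (k+1)) L"
    using known_prod_hist NoInput by simp
  also have "\<dots> = block_prod N inp L (k+1)"
    by (rule known_prod_eq_block_prod) simp_all
  also have "\<dots> = window_prod N inp 0 (k+1)"
    using assms(2) by (simp add: block_prod_def)
  finally show ?thesis
    using mat_mult_identity_left[OF assms(3)] window_prod_column[OF assms(1) order_refl] assms(3) NoInput
    by (simp add: inp_def)
qed

lemma phase_start_log_bound:
  assumes "1 \<le> k"
  shows "real (phase_start N (Suc (floor_log (2*k)))) \<le> 4 * (real N ^ 2 * log 2 (2 * real k) + real k)"
proof -
  define L where "L = Suc (floor_log (2*k))"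
  have lg: "1 \<le> log 2 (2 * real k)" using assms by simp
  have "real L \<le> 1 + log 2 (2 * real k)"
    using floor_log_le_log[of "2*k"] assms by (simp add: L_def)
  then have "real L * real N^2 \<le> (2 * log 2 (2 * real k)) * real N^2"
    using lg by (intro mult_right_mono) auto
  then have L_le: "real L * real N^2 \<le> 2 * (real N^2 * log 2 (2 * real k))"
    by (simp add: algebra_simps)
  have "2^L \<le> 4*k"
    using floor_log_exp2_le[of "2*k"] assms by (simp add: L_def)
  then have "real (2^L) \<le> 4 * real k" by linarith
  have "real (phase_start N L) \<le> real L * real N^2 + real (2^L)"
    using of_nat_mono[OF phase_start_le_bound[of N L]] by simp
  also have "\<dots> \<le> 2 * (real N^2 * log 2 (2 * real k)) + 4 * real k"
    using L_le \<open>real (2^L) \<le> 4 * real k\<close> by (rule add_mono)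
  also have "\<dots> \<le> 4 * (real N ^ 2 * log 2 (2 * real k) + real k)"
    using lg by simp
  finally show ?thesis by (simp only: L_def)
qed

theorem mainTheorem5:
  shows "\<exists>C::real. C > 0 \<and>
    (\<forall>k N::nat. k \<ge> 1 \<longrightarrow> N \<ge> 1 \<longrightarrow>
      (\<exists>(P::protocol) (out :: (bool \<times> bool) list \<Rightarrow> nat \<Rightarrow> bit) (R::nat).
         real R \<le> C * (real N ^ 2 * log 2 (2 * real k) + real k) \<and>
         (\<forall>x A. \<forall>j<N. out (hist P (line_inputs k x A) k R (k + 1)) j = iterprod N A k x j)))"
proof (intro exI[of _ 4] conjI allI impI)
  fix k N :: nat
  assume "1 \<le> k" "1 \<le> N"
  define L where "L = Suc (floor_log (2*k))"
  have "k + 1 < 2^L"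
    using floor_log_exp2_gt[of "2*k"] \<open>1 \<le> k\<close> by (simp add: L_def)
  then have "\<forall>x A. \<forall>j<N. known_prod N k (k+1) NoInput
      (\<lambda>e. fst (hist (doubling_protocol N k) (line_inputs k x A) k (phase_start N L) (k+1) ! e)) L j 0
      = iterprod N A k x j"
    using doubling_protocol_correct[OF \<open>1 \<le> N\<close>] by blast
  moreover have "real (phase_start N L) \<le> 4 * (real N ^ 2 * log 2 (2 * real k) + real k)"
    unfolding L_def using \<open>1 \<le> k\<close> by (rule phase_start_log_bound)
  ultimately show "\<exists>P out R. real R \<le> 4 * (real N ^ 2 * log 2 (2 * real k) + real k) \<and>
         (\<forall>x A. \<forall>j<N. out (hist P (line_inputs k x A) k R (k + 1)) j = iterprod N A k x j)"
    by (intro exI[of _ "doubling_protocol N k"] exI[of _ "phase_start N L"]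
          exI[of _ "\<lambda>h j. known_prod N k (k+1) NoInput (\<lambda>e. fst (h!e)) L j 0"]) auto
qed simp

end
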